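(* Let $\tilde{\mathbf{M}}$ be a real $n\times n$ skew-symmetric matrix and let $\mathbf{L}$ be a symmetric $n\times n$ matrix with entries in $\{0,1\}$ and all diagonal entries equal to $1$. Let $\tilde{\mathbf{M}}_{\mathbf{L}}=\mathbf{L}\circ\tilde{\mathbf{M}}$, let $\mathbf{D}_{\beta}=\mathbf{I}\circ(\mathbf{L}\mathbf{L}^\top)$ (the diagonal matrix whose $i$-th diagonal entry $\beta_i=n-\bar\beta_i$ is the number of indices $j$ with $L_{ij}=1$, $\bar\beta_i$ being the number of $j$ with $L_{ij}=0$), and let $\bar{\mathbf{L}}=\mathds{1}-\mathbf{L}$. Assume $\mathbf{D}_{\beta}+\bar{\mathbf{L}}$ is invertible. Then the problem $\min_{\mathbf{M}\in\mathcal{M}_T(n)}\|\mathbf{L}\circ(\tilde{\mathbf{M}}-\mathbf{M})\|_F^2$ has the closed-form solution $\mathbf{M}^\ast=(\mathbf{D}_{\beta}+\bar{\mathbf{L}})^{-1}\tilde{\mathbf{M}}_{\mathbf{L}}\mathds{1}+\mathds{1}\tilde{\mathbf{M}}_{\mathbf{L}}(\mathbf{D}_{\beta}+\bar{\mathbf{L}})^{-1}$.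
   Context: $\circ$ denotes the Hadamard (entrywise) product; $\mathds{1}$ is the $n\times n$ all-ones matrix; $\mathbf{I}$ is the identity; $\|\cdot\|_F$ is the Frobenius norm. A TDOA matrix is an $n\times n$ real matrix whose $(i,j)$ entry is $\tau_i-\tau_j$ for some $(\tau_1,\dots,\tau_n)\in\mathbb{R}^n$; $\mathcal{M}_T(n)$ is the set of all $n\times n$ TDOA matrices. The matrix $\mathbf{L}$ encodes which measurements are available: $L_{ij}=1$ if the TDOA between sensors $i$ and $j$ is known, $0$ otherwise. $\tilde{\mathbf{M}}$ is a noisy measured TDOA matrix (skew-symmetric). *)

theory Defs
  imports "HOL-Analysis.Analysis"
begin

definition hadamard :: "real^'n^'n \<Rightarrow> real^'n^'n \<Rightarrow> real^'n^'n" (infixl "\<circ>\<^sub>H" 70) where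
  "hadamard A B = (\<chi> i j. A $ i $ j * B $ i $ j)"

definition ones_mat :: "real^'n^'n" where
  "ones_mat = (\<chi> i j. 1)"

definition frob_norm :: "real^'n^'n \<Rightarrow> real" where
  "frob_norm A = sqrt (\<Sum>i\<in>UNIV. \<Sum>j\<in>UNIV. (A $ i $ j)\<^sup>2)"

definition tdoa_matrices :: "(real^'n^'n) set" where
  "tdoa_matrices = {M. \<exists>\<tau>::real^'n. \<forall>i j. M $ i $ j = \<tau> $ i - \<tau> $ j}"

end

theory Submission
  imports Defs
begin

text \<open>
  Let \<open>B = D\<^sub>\<beta> + (\<one> - L)\<close>, \<open>c = (L \<circ> Mt) 1\<close> and \<open>\<tau> = B\<^sup>-\<^sup>1 c\<close>. Since \<open>L \<circ> Mt\<close> is skew and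
  \<open>B\<^sup>-\<^sup>1\<close> is symmetric, \<open>M\<^sup>* = \<tau> 1\<^sup>T - 1 \<tau>\<^sup>T\<close>, the TDOA matrix of \<open>\<tau>\<close>. Every column of \<open>B\<close> sums
  to \<open>n\<close> and the entries of \<open>c\<close> sum to \<open>0\<close>, so the entries of \<open>\<tau>\<close> sum to \<open>0\<close>; on such
  vectors \<open>B\<close> acts as the Laplacian of the graph \<open>L\<close>, and \<open>B \<tau> = c\<close> becomes the system of
  normal equations \<open>\<Sum>\<^sub>j L\<^sub>i\<^sub>j (Mt\<^sub>i\<^sub>j - (\<tau>\<^sub>i - \<tau>\<^sub>j)) = 0\<close>. As the residual is skew and \<open>L\<close> is
  symmetric, the cross term in the expansion of \<open>\<Sum>\<^sub>i\<^sub>j L\<^sub>i\<^sub>j (Mt\<^sub>i\<^sub>j - (s\<^sub>i - s\<^sub>j))\<^sup>2\<close> around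
  \<open>\<tau>\<close> then vanishes, which leaves a nonnegative remainder.
\<close>

lemma transpose_hadamard: "transpose (A \<circ>\<^sub>H B) = transpose A \<circ>\<^sub>H transpose B"
  by (simp add: vec_eq_iff transpose_def hadamard_def)

lemma skew_hadamard:
  assumes "transpose L = L" and "transpose M = - M"
  shows "transpose (L \<circ>\<^sub>H M) = - (L \<circ>\<^sub>H M)"
proof -
  have "transpose (L \<circ>\<^sub>H M) = L \<circ>\<^sub>H - M"
    by (simp add: transpose_hadamard assms)
  then show ?thesis
    by (simp add: vec_eq_iff hadamard_def)
qed

lemma symmetric_matrix_nth:
  assumes "transpose L = L"
  shows "L $ j $ i = L $ i $ j"
  using arg_cong[OF assms, of "\<lambda>Y. Y $ i $ j"] by (simp add: transpose_def)

lemma skew_matrix_nth: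
  assumes "transpose X = - X"
  shows "X $ j $ i = - X $ i $ j"
  using arg_cong[OF assms, of "\<lambda>Y. Y $ i $ j"] by (simp add: transpose_def)

lemma matrix_mul_ones_mat_nth: "(X ** ones_mat) $ i $ j = (X *v 1) $ i"
  by (simp add: matrix_matrix_mult_def matrix_vector_mult_def ones_mat_def)

lemma ones_mat_matrix_mul_nth: "(ones_mat ** X) $ i $ j = (1 v* X) $ j"
  by (simp add: matrix_matrix_mult_def vector_matrix_mult_def ones_mat_def)

lemma sum_matrix_vector_mult_const_colsum:
  fixes B :: "'a::comm_semiring_1^'n^'m"
  assumes "\<And>j. (\<Sum>i\<in>UNIV. B $ i $ j) = a"
  shows "(\<Sum>i\<in>UNIV. (B *v x) $ i) = a * (\<Sum>j\<in>UNIV. x $ j)"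
proof -
  have "(\<Sum>i\<in>UNIV. (B *v x) $ i) = (\<Sum>j\<in>UNIV. (\<Sum>i\<in>UNIV. B $ i $ j) * x $ j)"
    unfolding matrix_vector_mult_def vec_lambda_beta sum_distrib_right by (rule sum.swap)
  with assms show ?thesis by (simp add: sum_distrib_left)
qed

lemma sum_skew_matrix_vector_ones:
  fixes X :: "real^'n^'n"
  assumes "transpose X = - X"
  shows "(\<Sum>i\<in>UNIV. (X *v 1) $ i) = 0"
proof -
  have "(\<Sum>i\<in>UNIV. (X *v 1) $ i) = (\<Sum>i\<in>UNIV. \<Sum>j\<in>UNIV. X $ i $ j)"
    by (simp add: matrix_vector_mult_def)
  also have "\<dots> = (\<Sum>j\<in>UNIV. \<Sum>i\<in>UNIV. X $ i $ j)"
    by (rule sum.swap)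
  also have "\<dots> = (\<Sum>j\<in>UNIV. \<Sum>i\<in>UNIV. - X $ j $ i)"
    by (intro sum.cong refl) (rule skew_matrix_nth[OF assms])
  also have "\<dots> = - (\<Sum>j\<in>UNIV. \<Sum>i\<in>UNIV. X $ j $ i)"
    by (simp add: sum_negf)
  also have "\<dots> = - (\<Sum>i\<in>UNIV. (X *v 1) $ i)"
    by (simp add: matrix_vector_mult_def)
  finally show ?thesis by simp
qed

lemma invertible_matrix_inv:
  assumes "invertible B"
  shows "B ** matrix_inv B = mat 1" and "matrix_inv B ** B = mat 1"
  using someI_ex[OF assms[unfolded invertible_def]] by (auto simp: matrix_inv_def)

lemma symmetric_matrix_inv:
  fixes B :: "real^'n^'n"
  assumes "invertible B" and "transpose B = B"
  shows "transpose (matrix_inv B) = matrix_inv B"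
proof -
  let ?A = "matrix_inv B"
  have "transpose ?A ** B = transpose (B ** ?A)"
    by (simp add: matrix_transpose_mul assms(2))
  also have "\<dots> = mat 1"
    by (simp add: invertible_matrix_inv(1)[OF assms(1)] transpose_mat)
  finally have left_inv: "transpose ?A ** B = mat 1" .
  have "transpose ?A = transpose ?A ** (B ** ?A)"
    by (simp add: invertible_matrix_inv(1)[OF assms(1)])
  also have "\<dots> = ?A"
    by (simp add: matrix_mul_assoc left_inv)
  finally show ?thesis .
qed

lemma frob_norm_hadamard_01_sq:
  assumes L_01: "\<forall>i j. L $ i $ j = 0 \<or> L $ i $ j = 1"
  shows "(frob_norm (L \<circ>\<^sub>H X))\<^sup>2 = (\<Sum>i\<in>UNIV. \<Sum>j\<in>UNIV. L $ i $ j * (X $ i $ j)\<^sup>2)"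
proof -
  have "(L $ i $ j * X $ i $ j)\<^sup>2 = L $ i $ j * (X $ i $ j)\<^sup>2" for i j
    using L_01[rule_format, of i j] by (elim disjE) simp_all
  moreover have "0 \<le> (\<Sum>i\<in>UNIV. \<Sum>j\<in>UNIV. ((L \<circ>\<^sub>H X) $ i $ j)\<^sup>2)"
    by (intro sum_nonneg) auto
  ultimately show ?thesis
    by (simp add: frob_norm_def hadamard_def)
qed

lemma weighted_skew_cross_term_zero:
  fixes w R :: "'a::finite \<Rightarrow> 'a \<Rightarrow> real" and d :: "'a \<Rightarrow> real"
  assumes w_sym: "\<And>i j. w j i = w i j"
    and R_skew: "\<And>i j. R j i = - R i j"
    and normal: "\<And>i. (\<Sum>j\<in>UNIV. w i j * R i j) = 0"
  shows "(\<Sum>i\<in>UNIV. \<Sum>j\<in>UNIV. w i j * R i j * (d i - d j)) = 0"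
proof -
  have "(\<Sum>i\<in>UNIV. \<Sum>j\<in>UNIV. w i j * R i j * d i) = (\<Sum>i\<in>UNIV. (\<Sum>j\<in>UNIV. w i j * R i j) * d i)"
    by (simp add: sum_distrib_right)
  with normal have left: "(\<Sum>i\<in>UNIV. \<Sum>j\<in>UNIV. w i j * R i j * d i) = 0"
    by simp
  have "(\<Sum>i\<in>UNIV. \<Sum>j\<in>UNIV. w i j * R i j * d j) = (\<Sum>j\<in>UNIV. \<Sum>i\<in>UNIV. w i j * R i j * d j)"
    by (rule sum.swap)
  also have "\<dots> = (\<Sum>j\<in>UNIV. \<Sum>i\<in>UNIV. - (w j i * R j i * d j))"
  proof (intro sum.cong refl)
    fix i j
    show "w i j * R i j * d j = - (w j i * R j i * d j)"
      using w_sym[of i j] R_skew[of i j] by simp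
  qed
  also have "\<dots> = - (\<Sum>j\<in>UNIV. \<Sum>i\<in>UNIV. w j i * R j i * d j)"
    by (simp only: sum_negf)
  finally have right: "(\<Sum>i\<in>UNIV. \<Sum>j\<in>UNIV. w i j * R i j * d j) = 0"
    using left by simp
  have "(\<Sum>i\<in>UNIV. \<Sum>j\<in>UNIV. w i j * R i j * (d i - d j))
      = (\<Sum>i\<in>UNIV. \<Sum>j\<in>UNIV. w i j * R i j * d i) - (\<Sum>i\<in>UNIV. \<Sum>j\<in>UNIV. w i j * R i j * d j)"
    by (simp only: right_diff_distrib sum_subtractf)
  with left right show ?thesis by simp
qed

lemma weighted_skew_residual_minimal:
  fixes w M :: "'a::finite \<Rightarrow> 'a \<Rightarrow> real" and \<tau> s :: "'a \<Rightarrow> real"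
  assumes w_sym: "\<And>i j. w j i = w i j"
    and w_nonneg: "\<And>i j. 0 \<le> w i j"
    and M_skew: "\<And>i j. M j i = - M i j"
    and normal: "\<And>i. (\<Sum>j\<in>UNIV. w i j * (M i j - (\<tau> i - \<tau> j))) = 0"
  shows "(\<Sum>i\<in>UNIV. \<Sum>j\<in>UNIV. w i j * (M i j - (\<tau> i - \<tau> j))\<^sup>2)
       \<le> (\<Sum>i\<in>UNIV. \<Sum>j\<in>UNIV. w i j * (M i j - (s i - s j))\<^sup>2)"
proof -
  define R where "R i j = M i j - (\<tau> i - \<tau> j)" for i j
  define d where "d i = s i - \<tau> i" for i
  have cross: "(\<Sum>i\<in>UNIV. \<Sum>j\<in>UNIV. w i j * R i j * (d i - d j)) = 0"
  proof (rule weighted_skew_cross_term_zero[OF w_sym])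
    show "R j i = - R i j" for i j
      using M_skew[of i j] by (simp add: R_def)
  qed (simp add: R_def normal)
  have "(\<Sum>i\<in>UNIV. \<Sum>j\<in>UNIV. w i j * (M i j - (s i - s j))\<^sup>2)
      = (\<Sum>i\<in>UNIV. \<Sum>j\<in>UNIV. w i j * (R i j)\<^sup>2 - 2 * (w i j * R i j * (d i - d j)) + w i j * (d i - d j)\<^sup>2)"
    by (intro sum.cong refl) (simp add: R_def d_def power2_eq_square algebra_simps)
  also have "\<dots> = (\<Sum>i\<in>UNIV. \<Sum>j\<in>UNIV. w i j * (R i j)\<^sup>2)
      + (\<Sum>i\<in>UNIV. \<Sum>j\<in>UNIV. w i j * (d i - d j)\<^sup>2)"
    using cross by (simp add: sum.distrib sum_subtractf sum_distrib_left[symmetric])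
  also have "\<dots> \<ge> (\<Sum>i\<in>UNIV. \<Sum>j\<in>UNIV. w i j * (R i j)\<^sup>2)"
    using w_nonneg by (simp add: sum_nonneg)
  finally show ?thesis
    by (simp add: R_def)
qed

definition tdoa_of :: "real^'n \<Rightarrow> real^'n^'n" where
  "tdoa_of \<tau> = (\<chi> i j. \<tau> $ i - \<tau> $ j)"

lemma tdoa_of_in_tdoa_matrices: "tdoa_of \<tau> \<in> tdoa_matrices"
  by (auto simp: tdoa_matrices_def tdoa_of_def)

lemma tdoa_matrices_eq_range: "tdoa_matrices = range tdoa_of"
  by (auto simp: tdoa_matrices_def tdoa_of_def vec_eq_iff)

lemma tdoa_closed_form:
  fixes A M :: "real^'n^'n"
  assumes A_sym: "transpose A = A" and M_skew: "transpose M = - M"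
  shows "A ** M ** ones_mat + ones_mat ** M ** A = tdoa_of (A *v (M *v 1))"
proof -
  have "(A ** M ** ones_mat) $ i $ j = (A *v (M *v 1)) $ i" for i j
    by (simp add: matrix_mul_ones_mat_nth matrix_vector_mul_assoc)
  moreover have "(ones_mat ** M ** A) $ i $ j = - (A *v (M *v 1)) $ j" for i j
  proof -
    have "(ones_mat ** M ** A) $ i $ j = (1 v* (M ** A)) $ j"
      by (simp add: matrix_mul_assoc[symmetric] ones_mat_matrix_mul_nth)
    also have "\<dots> = (transpose A *v (transpose M *v 1)) $ j"
      by (simp add: vector_matrix_mul_assoc transpose_matrix_vector)
    finally show ?thesis
      by (simp add: A_sym M_skew matrix_vector_mult_def sum_negf)
  qed
  ultimately show ?thesis
    by (simp add: vec_eq_iff tdoa_of_def)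
qed

lemma tdoa_normal_equations_imp_optimal:
  fixes Mt L M :: "real^'n^'n"
  assumes skew: "transpose Mt = - Mt"
    and L_sym: "transpose L = L"
    and L_01: "\<forall>i j. L $ i $ j = 0 \<or> L $ i $ j = 1"
    and normal: "\<And>i. (\<Sum>j\<in>UNIV. L $ i $ j * (Mt $ i $ j - (\<tau> $ i - \<tau> $ j))) = 0"
    and M_tdoa: "M \<in> tdoa_matrices"
  shows "(frob_norm (L \<circ>\<^sub>H (Mt - tdoa_of \<tau>)))\<^sup>2 \<le> (frob_norm (L \<circ>\<^sub>H (Mt - M)))\<^sup>2"
proof -
  obtain s where s: "M = tdoa_of s"
    using M_tdoa by (auto simp: tdoa_matrices_eq_range)
  have L_nonneg: "0 \<le> L $ i $ j" for i j
    using L_01 by (metis order_refl zero_le_one)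
  have "(\<Sum>i\<in>UNIV. \<Sum>j\<in>UNIV. L $ i $ j * (Mt $ i $ j - (\<tau> $ i - \<tau> $ j))\<^sup>2)
      \<le> (\<Sum>i\<in>UNIV. \<Sum>j\<in>UNIV. L $ i $ j * (Mt $ i $ j - (s $ i - s $ j))\<^sup>2)"
    by (rule weighted_skew_residual_minimal[where w = "\<lambda>i j. L $ i $ j" and M = "\<lambda>i j. Mt $ i $ j",
          OF symmetric_matrix_nth[OF L_sym] L_nonneg skew_matrix_nth[OF skew] normal])
  then show ?thesis
    by (simp add: frob_norm_hadamard_01_sq[OF L_01] s tdoa_of_def)
qed

definition tdoa_normal_matrix :: "real^'n^'n \<Rightarrow> real^'n^'n" where
  "tdoa_normal_matrix L = mat 1 \<circ>\<^sub>H (L ** transpose L) + (ones_mat - L)"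

lemma tdoa_normal_matrix_nth:
  assumes L_01: "\<forall>i j. L $ i $ j = 0 \<or> L $ i $ j = 1"
  shows "tdoa_normal_matrix L $ i $ j = (if i = j then (\<Sum>k\<in>UNIV. L $ i $ k) else 0) + 1 - L $ i $ j"
proof -
  have idem: "L $ i' $ k * L $ i' $ k = L $ i' $ k" for i' k
    using L_01[rule_format, of i' k] by (elim disjE) simp_all
  show ?thesis
    by (simp add: idem tdoa_normal_matrix_def hadamard_def mat_def ones_mat_def
        matrix_matrix_mult_def transpose_def)
qed

lemma tdoa_normal_matrix_symmetric:
  assumes "transpose L = L" and "\<forall>i j. L $ i $ j = 0 \<or> L $ i $ j = 1"
  shows "transpose (tdoa_normal_matrix L) = tdoa_normal_matrix L"
  by (simp add: vec_eq_iff transpose_def tdoa_normal_matrix_nth[OF assms(2)]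
      symmetric_matrix_nth[OF assms(1)])

lemma tdoa_normal_matrix_colsum:
  fixes L :: "real^'n^'n"
  assumes L_sym: "transpose L = L" and L_01: "\<forall>i j. L $ i $ j = 0 \<or> L $ i $ j = 1"
  shows "(\<Sum>i\<in>UNIV. tdoa_normal_matrix L $ i $ j) = real CARD('n)"
proof -
  have "(\<Sum>i\<in>UNIV. tdoa_normal_matrix L $ i $ j)
      = (\<Sum>i\<in>UNIV. if i = j then (\<Sum>k\<in>UNIV. L $ i $ k) else 0) + (\<Sum>i\<in>UNIV. 1 - L $ i $ j)"
    by (simp add: tdoa_normal_matrix_nth[OF L_01] sum.distrib add_diff_eq[symmetric])
  also have "\<dots> = (\<Sum>k\<in>UNIV. L $ j $ k) + real CARD('n) - (\<Sum>i\<in>UNIV. L $ i $ j)"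
    by (simp add: sum_subtractf)
  also have "\<dots> = real CARD('n)"
    by (simp add: symmetric_matrix_nth[OF L_sym])
  finally show ?thesis .
qed

lemma tdoa_normal_matrix_mult_nth:
  assumes L_01: "\<forall>i j. L $ i $ j = 0 \<or> L $ i $ j = 1"
    and sum_zero: "(\<Sum>j\<in>UNIV. x $ j) = 0"
  shows "(tdoa_normal_matrix L *v x) $ i = (\<Sum>j\<in>UNIV. L $ i $ j * (x $ i - x $ j))"
proof -
  have "(tdoa_normal_matrix L *v x) $ i
      = (\<Sum>j\<in>UNIV. (if i = j then (\<Sum>k\<in>UNIV. L $ i $ k) * x $ j else 0) + x $ j - L $ i $ j * x $ j)"
    unfolding matrix_vector_mult_def tdoa_normal_matrix_nth[OF L_01] vec_lambda_beta
    by (intro sum.cong refl) (simp add: algebra_simps)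
  also have "\<dots> = (\<Sum>k\<in>UNIV. L $ i $ k) * x $ i + (\<Sum>j\<in>UNIV. x $ j) - (\<Sum>j\<in>UNIV. L $ i $ j * x $ j)"
    by (simp add: sum.distrib sum_subtractf)
  also have "\<dots> = (\<Sum>j\<in>UNIV. L $ i $ j * (x $ i - x $ j))"
    by (simp add: sum_zero right_diff_distrib sum_subtractf sum_distrib_right)
  finally show ?thesis .
qed

lemma tdoa_normal_equations:
  fixes Mt L :: "real^'n^'n"
  assumes skew: "transpose Mt = - Mt"
    and L_sym: "transpose L = L"
    and L_01: "\<forall>i j. L $ i $ j = 0 \<or> L $ i $ j = 1"
    and inv: "invertible (tdoa_normal_matrix L)"
  defines "\<tau> \<equiv> matrix_inv (tdoa_normal_matrix L) *v ((L \<circ>\<^sub>H Mt) *v 1)"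
  shows "(\<Sum>j\<in>UNIV. L $ i $ j * (Mt $ i $ j - (\<tau> $ i - \<tau> $ j))) = 0"
proof -
  have "tdoa_normal_matrix L *v \<tau> = (tdoa_normal_matrix L ** matrix_inv (tdoa_normal_matrix L)) *v ((L \<circ>\<^sub>H Mt) *v 1)"
    unfolding \<tau>_def by (rule matrix_vector_mul_assoc)
  then have solves: "tdoa_normal_matrix L *v \<tau> = (L \<circ>\<^sub>H Mt) *v 1"
    by (simp add: invertible_matrix_inv(1)[OF inv])
  have "real CARD('n) * (\<Sum>j\<in>UNIV. \<tau> $ j) = (\<Sum>i\<in>UNIV. ((L \<circ>\<^sub>H Mt) *v 1) $ i)"
    using sum_matrix_vector_mult_const_colsum[OF tdoa_normal_matrix_colsum[OF L_sym L_01], of \<tau>]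
    by (simp only: solves)
  also have "\<dots> = 0"
    by (rule sum_skew_matrix_vector_ones[OF skew_hadamard[OF L_sym skew]])
  finally have \<tau>_sum: "(\<Sum>j\<in>UNIV. \<tau> $ j) = 0"
    by simp
  have "(\<Sum>j\<in>UNIV. L $ i $ j * Mt $ i $ j) = ((L \<circ>\<^sub>H Mt) *v 1) $ i"
    by (simp add: matrix_vector_mult_def hadamard_def)
  also have "\<dots> = (\<Sum>j\<in>UNIV. L $ i $ j * (\<tau> $ i - \<tau> $ j))"
    by (simp add: solves[symmetric] tdoa_normal_matrix_mult_nth[OF L_01 \<tau>_sum])
  finally show ?thesis
    by (simp add: right_diff_distrib sum_subtractf)
qed

theorem theorem4:
  fixes Mt L :: "real^'n^'n"
  assumes skew: "transpose Mt = - Mt"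
    and L_sym: "transpose L = L"
    and L_01: "\<forall>i j. L $ i $ j = 0 \<or> L $ i $ j = 1"
    and L_diag: "\<forall>i. L $ i $ i = 1"
    and inv: "invertible (hadamard (mat 1) (L ** transpose L) + (ones_mat - L))"
  shows "let ML = hadamard L Mt;
             A = matrix_inv (hadamard (mat 1) (L ** transpose L) + (ones_mat - L));
             Mstar = A ** ML ** ones_mat + ones_mat ** ML ** A
         in Mstar \<in> tdoa_matrices \<and>
            (\<forall>M \<in> tdoa_matrices.
               (frob_norm (hadamard L (Mt - Mstar)))\<^sup>2 \<le> (frob_norm (hadamard L (Mt - M)))\<^sup>2)"
proof -
  let ?A = "matrix_inv (tdoa_normal_matrix L)"
  define \<tau> where "\<tau> = ?A *v ((L \<circ>\<^sub>H Mt) *v 1)"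
  have inv': "invertible (tdoa_normal_matrix L)"
    using inv by (simp add: tdoa_normal_matrix_def)
  have Mstar: "?A ** (L \<circ>\<^sub>H Mt) ** ones_mat + ones_mat ** (L \<circ>\<^sub>H Mt) ** ?A = tdoa_of \<tau>"
    unfolding \<tau>_def
    by (rule tdoa_closed_form[OF symmetric_matrix_inv[OF inv'] skew_hadamard[OF L_sym skew]])
       (rule tdoa_normal_matrix_symmetric[OF L_sym L_01])
  have "(\<Sum>j\<in>UNIV. L $ i $ j * (Mt $ i $ j - (\<tau> $ i - \<tau> $ j))) = 0" for i
    unfolding \<tau>_def by (rule tdoa_normal_equations[OF skew L_sym L_01 inv'])
  then have "\<forall>M \<in> tdoa_matrices.
      (frob_norm (L \<circ>\<^sub>H (Mt - tdoa_of \<tau>)))\<^sup>2 \<le> (frob_norm (L \<circ>\<^sub>H (Mt - M)))\<^sup>2"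
    using tdoa_normal_equations_imp_optimal[OF skew L_sym L_01] by blast
  then show ?thesis
    unfolding tdoa_normal_matrix_def[symmetric] Let_def Mstar
    using tdoa_of_in_tdoa_matrices by blast
qed

end
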